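(* Let $N$ be an odd positive integer and let $r\ge s\ge 2$, $r'\ge s'\ge2$ with $r\ge r'$ and $s\ge s'$, so that $\Phi_r^s\subset\Phi_{r'}^{s'}$. Then the diagram $$(\Phi_r^s)^{\mathrm{ab}}\to(\Phi_{r'}^{s'})^{\mathrm{ab}},\quad U':(\Phi_r^s)^{\mathrm{ab}}\to(\Phi_{r+1}^s)^{\mathrm{ab}},\quad U':(\Phi_{r'}^{s'})^{\mathrm{ab}}\to(\Phi_{r'+1}^{s'})^{\mathrm{ab}},\quad (\Phi_{r+1}^s)^{\mathrm{ab}}\to(\Phi_{r'+1}^{s'})^{\mathrm{ab}}$$ commutes, i.e. $U'$ followed by the inclusion-induced map $(\Phi_{r+1}^s)^{\mathrm{ab}}\to(\Phi_{r'+1}^{s'})^{\mathrm{ab}}$ equals the inclusion-induced map $(\Phi_r^s)^{\mathrm{ab}}\to(\Phi_{r'}^{s'})^{\mathrm{ab}}$ followed by $U'$. Consequently the Atkin operator $U$ commutes with the inclusion-induced morphism $(\Phi_r^s)^{\mathrm{ab}}\to(\Phi_{r'}^{s'})^{\mathrm{ab}}$.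
   Context: For $M\ge1$, $\Gamma_1(M)=\{\begin{pmatrix}a&b\\c&d\end{pmatrix}\in\mathrm{SL}_2(\mathbb{Z}) : c\equiv0,\ a\equiv d\equiv1 \pmod M\}$, $\Gamma_0(M)=\{c\equiv 0\pmod M\}$, and $\Gamma^0(2)=\{\begin{pmatrix}a&b\\c&d\end{pmatrix}\in\mathrm{SL}_2(\mathbb{Z}): b\equiv0\pmod 2\}$. For $r\ge s\ge2$, $\Phi_r^s:=\Gamma_1(N2^s)\cap\Gamma_0(2^r)$; $G^{\mathrm{ab}}$ denotes the abelianization of a group $G$. Let $t=\begin{pmatrix}1&0\\0&2\end{pmatrix}$. Then $\Phi_r^s\cap\Gamma^0(2)$ has index $2$ in $\Phi_r^s$, and $x\mapsto txt^{-1}$ is an isomorphism $\Phi_r^s\cap\Gamma^0(2)\to\Phi_{r+1}^s$. The operator $U':(\Phi_r^s)^{\mathrm{ab}}\to(\Phi_{r+1}^s)^{\mathrm{ab}}$ is the composite of the transfer $V:(\Phi_r^s)^{\mathrm{ab}}\to(\Phi_r^s\cap\Gamma^0(2))^{\mathrm{ab}}$ with the map induced by $x\mapsto txt^{-1}$; the Atkin operator $U\in\mathrm{End}((\Phi_r^s)^{\mathrm{ab}})$ is $U'$ followed by the map $(\Phi_{r+1}^s)^{\mathrm{ab}}\to(\Phi_r^s)^{\mathrm{ab}}$ induced by inclusion. *)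

theory Defs
  imports "HOL-Algebra.Algebra"
begin

text \<open>2x2 integer matrices ((a,b),(c,d)) encoded as tuples (a,b,c,d).\<close>
type_synonym mat2 = "int \<times> int \<times> int \<times> int"

fun m2mult :: "mat2 \<Rightarrow> mat2 \<Rightarrow> mat2" where
  "m2mult (a,b,c,d) (e,f,g,h) = (a*e+b*g, a*f+b*h, c*e+d*g, c*f+d*h)"

definition m2one :: mat2 where "m2one = (1,0,0,1)"

definition SL2Z :: "mat2 set" where
  "SL2Z = {(x,y,z,w). x*w - y*z = (1::int)}"

definition matgrp :: "mat2 set \<Rightarrow> mat2 monoid" where
  "matgrp S = \<lparr>carrier = S, monoid.mult = m2mult, one = m2one\<rparr>"

definition Gamma1 :: "int \<Rightarrow> mat2 set" where
  "Gamma1 M = {m \<in> SL2Z. case m of (a,b,c,d) \<Rightarrow> M dvd c \<and> M dvd (a - 1) \<and> M dvd (d - 1)}"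

definition Gamma0 :: "int \<Rightarrow> mat2 set" where
  "Gamma0 M = {m \<in> SL2Z. case m of (a,b,c,d) \<Rightarrow> M dvd c}"

definition Gamma0_upper2 :: "mat2 set" where
  "Gamma0_upper2 = {m \<in> SL2Z. case m of (a,b,c,d) \<Rightarrow> (2::int) dvd b}"

definition Phi :: "int \<Rightarrow> nat \<Rightarrow> nat \<Rightarrow> mat2 set" where
  "Phi N r s = Gamma1 (N * 2^s) \<inter> Gamma0 (2^r)"

definition ab :: "mat2 set \<Rightarrow> mat2 set monoid" where
  "ab S = matgrp S Mod derived (matgrp S) S"

definition cls :: "mat2 set \<Rightarrow> mat2 \<Rightarrow> mat2 set" where
  "cls S g = r_coset (matgrp S) (derived (matgrp S) S) g"

definition incl_ab :: "mat2 set \<Rightarrow> mat2 set \<Rightarrow> mat2 set \<Rightarrow> mat2 set" where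
  "incl_ab A B C = cls B (SOME g. g \<in> C)"

text \<open>Transfer G^ab \<rightarrow> H^ab for a subgroup H of finite index, via a right transversal T
  (H t, t \<in> T, are the distinct right cosets): V(g) = \<Prod>_{t\<in>T} class of t g (t')^{-1},
  where t' \<in> T with H t g = H t'.\<close>
definition right_transversal :: "mat2 set \<Rightarrow> mat2 set \<Rightarrow> mat2 set \<Rightarrow> bool" where
  "right_transversal G H T \<longleftrightarrow> T \<subseteq> G \<and>
     (\<forall>x\<in>G. \<exists>!t. t \<in> T \<and> r_coset (matgrp G) H x = r_coset (matgrp G) H t)"

definition tv_rep :: "mat2 set \<Rightarrow> mat2 set \<Rightarrow> mat2 set \<Rightarrow> mat2 \<Rightarrow> mat2" where
  "tv_rep G H T x = (THE t. t \<in> T \<and> r_coset (matgrp G) H x = r_coset (matgrp G) H t)"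

definition transfer_elt :: "mat2 set \<Rightarrow> mat2 set \<Rightarrow> mat2 \<Rightarrow> mat2 set" where
  "transfer_elt G H g =
     (let T = (SOME T. right_transversal G H T) in
      finprod (ab H)
        (\<lambda>t. cls H (m2mult (m2mult t g) (m_inv (matgrp G) (tv_rep G H T (m2mult t g))))) T)"

definition transfer_ab :: "mat2 set \<Rightarrow> mat2 set \<Rightarrow> mat2 set \<Rightarrow> mat2 set" where
  "transfer_ab G H C = transfer_elt G H (SOME g. g \<in> C)"

text \<open>Conjugation x \<mapsto> t x t^{-1}, t = diag(1,2): (a,b,c,d) \<mapsto> (a, b/2, 2c, d) (b even).\<close>
fun tconj :: "mat2 \<Rightarrow> mat2" where
  "tconj (x,y,z,w) = (x, y div 2, 2*z, w)"

definition Uprime :: "int \<Rightarrow> nat \<Rightarrow> nat \<Rightarrow> mat2 set \<Rightarrow> mat2 set" where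
  "Uprime N r s C =
     (let Y = transfer_ab (Phi N r s) (Phi N r s \<inter> Gamma0_upper2) C
      in cls (Phi N (Suc r) s) (tconj (SOME g. g \<in> Y)))"

definition Atkin_U :: "int \<Rightarrow> nat \<Rightarrow> nat \<Rightarrow> mat2 set \<Rightarrow> mat2 set" where
  "Atkin_U N r s C = incl_ab (Phi N (Suc r) s) (Phi N r s) (Uprime N r s C)"

end

theory Submission
  imports Defs
begin

text \<open>
  Let G = Phi_r^s and H = G \<inter> Gamma^0(2). As G \<subseteq> Gamma_1(2), the diagonal entries of g \<in> G are
  odd, so g \<notin> H exactly when g tau^-1 \<in> H for tau = ((1,1),(0,1)): H has index 2 in G with
  right transversal {1, tau}. For this transversal the transfer is
  V(g) = [g \<cdot> tau g tau^-1] if g \<in> H and V(g) = [g^2] otherwise, a formula that does not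
  mention G. Hence for Phi_r^s \<subseteq> Phi_r'^s' both paths around the square send the class of g
  to the class of t V(g) t^-1, and composing with one more inclusion gives the claim for U.
  The definitions pick an arbitrary transversal and arbitrary class representatives, so one
  also needs that every transversal {t1, t2} yields the same V(g), and that V, being a
  homomorphism to an abelian group, is constant on classes.
\<close>

section \<open>The group SL2(Z) and its congruence subgroups\<close>

abbreviation SL2 :: "mat2 monoid" where "SL2 \<equiv> matgrp SL2Z"

fun minv :: "mat2 \<Rightarrow> mat2" where "minv (a,b,c,d) = (d,-b,-c,a)"

lemma m2mult_assoc: "m2mult (m2mult x y) z = m2mult x (m2mult y z)"
  by (cases x; cases y; cases z) (simp add: algebra_simps)

lemma m2mult_one_left [simp]: "m2mult m2one x = x"
  and m2mult_one_right [simp]: "m2mult x m2one = x"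
  by (cases x; simp add: m2one_def)+

lemma SL2Z_m2mult: "x \<in> SL2Z \<Longrightarrow> y \<in> SL2Z \<Longrightarrow> m2mult x y \<in> SL2Z"
proof (cases x; cases y)
  fix a b c d e f g h
  assume "x \<in> SL2Z" "y \<in> SL2Z" and xy: "x = (a,b,c,d)" "y = (e,f,g,h)"
  then have "a * d - b * c = 1" "e * h - f * g = 1" by (auto simp: SL2Z_def)
  moreover have "(a * e + b * g) * (c * f + d * h) - (a * f + b * h) * (c * e + d * g)
                  = (a * d - b * c) * (e * h - f * g)"
    by (simp add: algebra_simps)
  ultimately show ?thesis using xy by (simp add: SL2Z_def)
qed

lemma minv_SL2Z: "x \<in> SL2Z \<Longrightarrow> minv x \<in> SL2Z"
  by (cases x) (simp add: SL2Z_def algebra_simps)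

lemma m2mult_minv_left [simp]: "x \<in> SL2Z \<Longrightarrow> m2mult (minv x) x = m2one"
  and m2mult_minv_right [simp]: "x \<in> SL2Z \<Longrightarrow> m2mult x (minv x) = m2one"
  by (cases x; simp add: SL2Z_def m2one_def algebra_simps)+

lemma m2mult_minv_cancel_left [simp]: "x \<in> SL2Z \<Longrightarrow> m2mult (minv x) (m2mult x y) = y"
  by (metis m2mult_assoc m2mult_minv_left m2mult_one_left)

lemma minv_m2mult: "minv (m2mult x y) = m2mult (minv y) (minv x)"
  by (cases x; cases y) (simp add: algebra_simps)

lemma minv_minv [simp]: "minv (minv x) = x"
  by (cases x) simp

lemma minv_m2one [simp]: "minv m2one = m2one"
  by (simp add: m2one_def)

declare minv.simps [simp del]

lemma matgrp_eq: "matgrp S = SL2\<lparr>carrier := S\<rparr>"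
  by (simp add: matgrp_def)

lemma matgrp_simps [simp]:
  "carrier (matgrp S) = S" "monoid.mult (matgrp S) = m2mult" "one (matgrp S) = m2one"
  by (simp_all add: matgrp_def)

lemma group_SL2: "group SL2"
proof (rule groupI)
  fix x y z assume "x \<in> carrier SL2" "y \<in> carrier SL2" "z \<in> carrier SL2"
  then show "x \<otimes>\<^bsub>SL2\<^esub> y \<in> carrier SL2"
    and "x \<otimes>\<^bsub>SL2\<^esub> y \<otimes>\<^bsub>SL2\<^esub> z = x \<otimes>\<^bsub>SL2\<^esub> (y \<otimes>\<^bsub>SL2\<^esub> z)"
    and "\<one>\<^bsub>SL2\<^esub> \<otimes>\<^bsub>SL2\<^esub> x = x"
    and "\<exists>y \<in> carrier SL2. y \<otimes>\<^bsub>SL2\<^esub> x = \<one>\<^bsub>SL2\<^esub>"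
    by (auto simp: SL2Z_m2mult m2mult_assoc intro!: bexI[of _ "minv x"] minv_SL2Z)
qed (simp add: SL2Z_def m2one_def)

lemma inv_SL2: "x \<in> SL2Z \<Longrightarrow> inv\<^bsub>SL2\<^esub> x = minv x"
  by (rule group.inv_equality[OF group_SL2]) (auto simp: minv_SL2Z)

lemma subgroup_SL2I:
  assumes "S \<subseteq> SL2Z" "m2one \<in> S" "\<And>x y. x \<in> S \<Longrightarrow> y \<in> S \<Longrightarrow> m2mult x y \<in> S"
    and "\<And>x. x \<in> S \<Longrightarrow> minv x \<in> S"
  shows "subgroup S SL2"
proof (rule subgroup.intro)
  fix x assume x: "x \<in> S"
  with assms(1) have "inv\<^bsub>SL2\<^esub> x = minv x" by (auto intro: inv_SL2)
  then show "inv\<^bsub>SL2\<^esub> x \<in> S" using assms(4)[OF x] by simp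
next
  show "\<And>x y. x \<in> S \<Longrightarrow> y \<in> S \<Longrightarrow> x \<otimes>\<^bsub>SL2\<^esub> y \<in> S"
    using assms(3) by simp
qed (use assms(1,2) in simp_all)

context
  fixes S assumes S: "subgroup S SL2"
begin

lemma subgroup_SL2Z: "x \<in> S \<Longrightarrow> x \<in> SL2Z"
  using subgroup.subset[OF S] by auto

lemma subgroup_m2mult: "x \<in> S \<Longrightarrow> y \<in> S \<Longrightarrow> m2mult x y \<in> S"
  using subgroup.m_closed[OF S] by simp

lemma subgroup_m2one: "m2one \<in> S"
  using subgroup.one_closed[OF S] by simp

lemma subgroup_minv: "x \<in> S \<Longrightarrow> minv x \<in> S"
  using subgroup.m_inv_closed[OF S, of x] by (simp add: inv_SL2 subgroup_SL2Z)

lemma subgroup_minv_iff: "minv x \<in> S \<longleftrightarrow> x \<in> S"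
  using subgroup_minv[of x] subgroup_minv[of "minv x"] by auto

lemma group_matgrp: "group (matgrp S)"
  using group.subgroup_imp_group[OF group_SL2 S] by (metis matgrp_eq)

lemma inv_matgrp: "x \<in> S \<Longrightarrow> inv\<^bsub>matgrp S\<^esub> x = minv x"
  using group.m_inv_consistent[OF group_SL2 S, of x] inv_SL2 subgroup_SL2Z
  by (metis matgrp_eq)

lemma subgroup_m2mult_left_iff:
  assumes u: "u \<in> S" shows "m2mult u v \<in> S \<longleftrightarrow> v \<in> S"
proof
  assume "m2mult u v \<in> S"
  then have "m2mult (minv u) (m2mult u v) \<in> S" using subgroup_m2mult subgroup_minv[OF u] by blast
  then show "v \<in> S" using subgroup_SL2Z[OF u] by simp
qed (rule subgroup_m2mult[OF u])

lemma subgroup_m2mult_right_iff: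
  assumes u: "u \<in> S" shows "m2mult v u \<in> S \<longleftrightarrow> v \<in> S"
proof -
  have "m2mult v u \<in> S \<longleftrightarrow> m2mult (minv u) (minv v) \<in> S"
    by (metis subgroup_minv_iff minv_m2mult)
  also have "\<dots> \<longleftrightarrow> v \<in> S"
    using subgroup_m2mult_left_iff[OF subgroup_minv[OF u]] subgroup_minv_iff by blast
  finally show ?thesis .
qed

end

lemma subgroup_Gamma1: "subgroup (Gamma1 M) SL2"
proof (rule subgroup_SL2I)
  fix x y assume x: "x \<in> Gamma1 M" and y: "y \<in> Gamma1 M"
  obtain a b c d e f g h where xy: "x = (a,b,c,d)" "y = (e,f,g,h)"
    by (cases x; cases y) auto
  have M: "M dvd c" "M dvd a - 1" "M dvd d - 1" "M dvd g" "M dvd e - 1" "M dvd h - 1"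
    using x y xy by (auto simp: Gamma1_def)
  have "a * e + b * g - 1 = (a - 1) * e + (e - 1) + b * g"
    and "c * f + d * h - 1 = c * f + (d - 1) * h + (h - 1)"
    by (simp_all add: algebra_simps)
  then have "M dvd a * e + b * g - 1" "M dvd c * f + d * h - 1"
    using M by (metis dvd_add dvd_mult dvd_mult2)+
  then show "m2mult x y \<in> Gamma1 M"
    using x y xy M SL2Z_m2mult by (auto simp: Gamma1_def)
next
  fix x assume "x \<in> Gamma1 M"
  then show "minv x \<in> Gamma1 M"
    using minv_SL2Z by (cases x) (auto simp: Gamma1_def minv.simps)
qed (auto simp: Gamma1_def SL2Z_def m2one_def)

lemma subgroup_Gamma0: "subgroup (Gamma0 M) SL2"
proof (rule subgroup_SL2I)
  fix x y assume "x \<in> Gamma0 M" "y \<in> Gamma0 M"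
  then show "m2mult x y \<in> Gamma0 M"
    using SL2Z_m2mult by (cases x; cases y) (auto simp: Gamma0_def)
next
  fix x assume "x \<in> Gamma0 M"
  then show "minv x \<in> Gamma0 M"
    using minv_SL2Z by (cases x) (auto simp: Gamma0_def minv.simps)
qed (auto simp: Gamma0_def SL2Z_def m2one_def)

lemma subgroup_Gamma0_upper2: "subgroup Gamma0_upper2 SL2"
proof (rule subgroup_SL2I)
  fix x y assume "x \<in> Gamma0_upper2" "y \<in> Gamma0_upper2"
  then show "m2mult x y \<in> Gamma0_upper2"
    using SL2Z_m2mult by (cases x; cases y) (auto simp: Gamma0_upper2_def)
next
  fix x assume "x \<in> Gamma0_upper2"
  then show "minv x \<in> Gamma0_upper2"
    using minv_SL2Z by (cases x) (auto simp: Gamma0_upper2_def minv.simps)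
qed (auto simp: Gamma0_upper2_def SL2Z_def m2one_def)

lemma subgroup_Phi: "subgroup (Phi N r s) SL2"
  unfolding Phi_def by (rule group.subgroups_Inter_pair[OF group_SL2 subgroup_Gamma1 subgroup_Gamma0])

lemma Phi_mem:
  "(a,b,c,d) \<in> Phi N r s \<longleftrightarrow>
     a * d - b * c = 1 \<and> N * 2^s dvd c \<and> N * 2^s dvd a - 1 \<and> N * 2^s dvd d - 1 \<and> 2^r dvd c"
  by (auto simp: Phi_def Gamma1_def Gamma0_def SL2Z_def)

lemma Gamma0_upper2_mem: "(a,b,c,d) \<in> Gamma0_upper2 \<longleftrightarrow> a * d - b * c = 1 \<and> 2 dvd b"
  by (auto simp: Gamma0_upper2_def SL2Z_def)

lemma Phi_mono: "r' \<le> r \<Longrightarrow> s' \<le> s \<Longrightarrow> Phi N r s \<subseteq> Phi N r' s'"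
proof
  fix x assume le: "r' \<le> r" "s' \<le> s" and x: "x \<in> Phi N r s"
  obtain a b c d where x_eq: "x = (a,b,c,d)" by (cases x)
  have "N * 2^s' dvd N * 2^s" "(2::int)^r' dvd 2^r"
    using le by (simp_all add: le_imp_power_dvd)
  then show "x \<in> Phi N r' s'"
    using x unfolding x_eq Phi_mem by (meson dvd_trans)
qed


section \<open>Abelianizations\<close>

context
  fixes S assumes S: "subgroup S SL2"
begin

lemma derived_matgrp: "derived (matgrp S) S = derived SL2 S"
  using group.derived_consistent[OF group_SL2 order_refl S] by (metis matgrp_eq)

lemma derived_subset: "derived SL2 S \<subseteq> S"
  using group.derived_incl[OF group_SL2 order_refl S] .

lemma cls_eq: "cls S g = derived SL2 S #>\<^bsub>matgrp S\<^esub> g"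
  by (simp add: cls_def derived_matgrp)

lemma mem_cls_iff: "y \<in> cls S x \<longleftrightarrow> (\<exists>d \<in> derived SL2 S. y = m2mult d x)"
  by (simp add: cls_eq r_coset_def)

lemma comm_group_ab: "comm_group (ab S)"
  using group.derived_quot_of_subgroup_is_comm_group[OF group_SL2 S]
  by (metis ab_def matgrp_eq derived_matgrp)

lemma carrier_ab: "carrier (ab S) = cls S ` S"
  by (auto simp: ab_def FactGroup_def RCOSETS_def cls_eq derived_matgrp)

lemma cls_in_carrier: "g \<in> S \<Longrightarrow> cls S g \<in> carrier (ab S)"
  by (simp add: carrier_ab)

lemma derived_normal: "derived SL2 S \<lhd> matgrp S"
  using group.derived_subgroup_is_normal[OF group_SL2 S] by (metis matgrp_eq)

lemma cls_m2mult: "g \<in> S \<Longrightarrow> h \<in> S \<Longrightarrow> cls S (m2mult g h) = cls S g \<otimes>\<^bsub>ab S\<^esub> cls S h"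
  using normal.rcos_sum[OF derived_normal, of g h]
  by (simp add: ab_def FactGroup_def cls_eq derived_matgrp)

lemma cls_self: "g \<in> S \<Longrightarrow> g \<in> cls S g"
  using group.rcos_self[OF group_matgrp[OF S], of g "derived SL2 S"] normal.axioms(1)[OF derived_normal]
  by (simp add: cls_eq)

lemma cls_subset: "g \<in> S \<Longrightarrow> cls S g \<subseteq> S"
proof
  fix y assume g: "g \<in> S" and "y \<in> cls S g"
  then obtain d where "d \<in> derived SL2 S" and y: "y = m2mult d g"
    unfolding mem_cls_iff by blast
  then show "y \<in> S" using derived_subset subgroup_m2mult[OF S _ g] by blast
qed

lemma cls_eqI: "g \<in> S \<Longrightarrow> y \<in> cls S g \<Longrightarrow> cls S y = cls S g"
  using group.repr_independence[OF group_matgrp[OF S], of y "derived SL2 S" g]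
        normal.axioms(1)[OF derived_normal]
  by (simp add: cls_eq)

lemma some_in_cls: "g \<in> S \<Longrightarrow> (SOME y. y \<in> cls S g) \<in> cls S g"
  using cls_self by (rule someI)

lemma cls_conj: "h \<in> S \<Longrightarrow> y \<in> S \<Longrightarrow> cls S (m2mult (m2mult h y) (minv h)) = cls S y"
proof -
  assume h: "h \<in> S" and y: "y \<in> S"
  interpret A: comm_group "ab S" by (rule comm_group_ab)
  have h': "minv h \<in> S" using h by (rule subgroup_minv[OF S])
  have "cls S (m2mult (m2mult h y) (minv h)) = cls S y \<otimes>\<^bsub>ab S\<^esub> cls S (m2mult h (minv h))"
    using h y h' by (simp add: cls_m2mult subgroup_m2mult[OF S] cls_in_carrier A.m_ac)
  also have "\<dots> = cls S y"
    using y subgroup_m2one[OF S] by (simp add: subgroup_SL2Z[OF S h] flip: cls_m2mult)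
  finally show ?thesis .
qed

end

lemma cls_group_hom:
  assumes A: "subgroup A SL2" and B: "subgroup B SL2"
    and f: "group_hom (matgrp A) (matgrp B) f" and x: "x \<in> A" and y: "y \<in> cls A x"
  shows "cls B (f y) = cls B (f x)"
proof -
  interpret f: group_hom "matgrp A" "matgrp B" f by (rule f)
  obtain d where d: "d \<in> derived SL2 A" and y_eq: "y = m2mult d x"
    using y unfolding mem_cls_iff[OF A] by blast
  have "f d \<in> f ` derived (matgrp A) A" using d derived_matgrp[OF A] by simp
  also have "\<dots> = derived (matgrp B) (f ` A)" using f.derived_img[of A] by simp
  also have "\<dots> \<subseteq> derived SL2 B"
    using group.mono_derived[OF group_matgrp[OF B], of "f ` A" B] f.hom_closed
    by (simp add: derived_matgrp[OF B] image_subset_iff)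
  finally have "f y \<in> cls B (f x)"
    using f.hom_mult[of d x] d derived_subset[OF A] x y_eq by (auto simp: mem_cls_iff[OF B])
  then show ?thesis using cls_eqI[OF B] f.hom_closed x by simp
qed

lemma incl_ab_cls:
  assumes A: "subgroup A SL2" and B: "subgroup B SL2" and "A \<subseteq> B" and x: "x \<in> A"
  shows "incl_ab A B (cls A x) = cls B x"
proof -
  have "group_hom (matgrp A) (matgrp B) id"
    using group_matgrp[OF A] group_matgrp[OF B] \<open>A \<subseteq> B\<close>
    by (auto intro!: group_hom.intro group_hom_axioms.intro homI)
  from cls_group_hom[OF A B this x some_in_cls[OF A x]] show ?thesis
    by (simp add: incl_ab_def)
qed

section \<open>The transfer to an index-two subgroup\<close>

definition tau :: mat2 where "tau = (1,1,0,1)"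

lemma tau_SL2Z: "tau \<in> SL2Z"
  by (simp add: tau_def SL2Z_def)

lemma tau_notin_Gamma0_upper2: "tau \<notin> Gamma0_upper2"
  by (simp add: tau_def Gamma0_upper2_mem)

definition coset_rep :: "mat2 \<Rightarrow> mat2" where
  "coset_rep x = (if x \<in> Gamma0_upper2 then m2one else tau)"

definition transfer_factor :: "mat2 \<Rightarrow> mat2 \<Rightarrow> mat2" where
  "transfer_factor t g = m2mult (m2mult t g) (minv (coset_rep (m2mult t g)))"

definition transfer_rep :: "mat2 \<Rightarrow> mat2" where
  "transfer_rep g = m2mult (transfer_factor m2one g) (transfer_factor tau g)"

lemma coset_rep_SL2Z: "coset_rep x \<in> SL2Z"
  by (simp add: coset_rep_def tau_SL2Z) (simp add: SL2Z_def m2one_def)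

lemma coset_rep_in_Gamma0_upper2_iff: "coset_rep x \<in> Gamma0_upper2 \<longleftrightarrow> x \<in> Gamma0_upper2"
  using subgroup_m2one[OF subgroup_Gamma0_upper2] tau_notin_Gamma0_upper2
  by (simp add: coset_rep_def)

text \<open>The assumptions say that {1, tau} is a right transversal of G \<inter> Gamma^0(2) in G.\<close>

locale tau_transversal =
  fixes G :: "mat2 set"
  assumes subgroup_G: "subgroup G SL2"
    and tau_in_G: "tau \<in> G"
    and m2mult_minv_tau: "x \<in> G \<Longrightarrow> x \<notin> Gamma0_upper2 \<Longrightarrow> m2mult x (minv tau) \<in> Gamma0_upper2"
begin

abbreviation H :: "mat2 set" where "H \<equiv> G \<inter> Gamma0_upper2"

lemma subgroup_H: "subgroup H SL2"
  by (rule group.subgroups_Inter_pair[OF group_SL2 subgroup_G subgroup_Gamma0_upper2])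

lemma tau_m2mult_in_Gamma0_upper2_iff:
  assumes y: "y \<in> G" shows "m2mult tau y \<in> Gamma0_upper2 \<longleftrightarrow> y \<notin> Gamma0_upper2"
proof
  assume "m2mult tau y \<in> Gamma0_upper2"
  then show "y \<notin> Gamma0_upper2"
    using tau_notin_Gamma0_upper2 subgroup_m2mult_right_iff[OF subgroup_Gamma0_upper2] by blast
next
  assume "y \<notin> Gamma0_upper2"
  then have "m2mult (minv y) (minv tau) \<in> Gamma0_upper2"
    using m2mult_minv_tau subgroup_minv[OF subgroup_G y]
          subgroup_minv_iff[OF subgroup_Gamma0_upper2] by blast
  then show "m2mult tau y \<in> Gamma0_upper2"
    by (metis subgroup_minv_iff[OF subgroup_Gamma0_upper2] minv_m2mult minv_minv)
qed

lemma m2mult_in_Gamma0_upper2_iff: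
  assumes x: "x \<in> G" and y: "y \<in> G"
  shows "m2mult x y \<in> Gamma0_upper2 \<longleftrightarrow> (x \<in> Gamma0_upper2 \<longleftrightarrow> y \<in> Gamma0_upper2)"
proof (cases "x \<in> Gamma0_upper2")
  case True
  then show ?thesis using subgroup_m2mult_left_iff[OF subgroup_Gamma0_upper2] by blast
next
  case False
  have "m2mult x y = m2mult (m2mult x (minv tau)) (m2mult tau y)"
    using tau_SL2Z by (simp add: m2mult_assoc)
  then show ?thesis
    using False subgroup_m2mult_left_iff[OF subgroup_Gamma0_upper2 m2mult_minv_tau[OF x False]]
          tau_m2mult_in_Gamma0_upper2_iff[OF y] by simp
qed

lemma coset_rep_in_G: "coset_rep x \<in> G"
  using subgroup_m2one[OF subgroup_G] tau_in_G by (simp add: coset_rep_def)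

lemma coset_rep_tau_m2mult:
  "g \<in> G \<Longrightarrow> coset_rep (m2mult tau g) = (if g \<in> Gamma0_upper2 then tau else m2one)"
  using tau_m2mult_in_Gamma0_upper2_iff by (simp add: coset_rep_def)

lemma transfer_factor_in_H:
  assumes "t \<in> G" "g \<in> G" shows "transfer_factor t g \<in> H"
proof -
  have tg: "m2mult t g \<in> G" using assms subgroup_m2mult[OF subgroup_G] by blast
  then have "transfer_factor t g \<in> Gamma0_upper2"
    using m2mult_minv_tau by (simp add: transfer_factor_def coset_rep_def)
  moreover have "transfer_factor t g \<in> G"
    unfolding transfer_factor_def
    using tg coset_rep_in_G subgroup_m2mult[OF subgroup_G] subgroup_minv[OF subgroup_G] by blast
  ultimately show ?thesis by blast
qed

lemma transfer_rep_in_H: "g \<in> G \<Longrightarrow> transfer_rep g \<in> H"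
  unfolding transfer_rep_def
  using transfer_factor_in_H subgroup_m2one[OF subgroup_G] tau_in_G subgroup_m2mult[OF subgroup_H]
  by blast

lemma coset_rep_m2mult:
  assumes "x \<in> G" "h \<in> G"
  shows "coset_rep (m2mult x h) = coset_rep (m2mult (coset_rep x) h)"
  using m2mult_in_Gamma0_upper2_iff[OF assms] m2mult_in_Gamma0_upper2_iff[OF coset_rep_in_G assms(2)]
        coset_rep_in_Gamma0_upper2_iff[of x]
  by (simp add: coset_rep_def)

text \<open>The cocycle identity behind the multiplicativity of the transfer.\<close>
lemma transfer_factor_m2mult:
  assumes "t \<in> G" "g \<in> G" "h \<in> G"
  shows "transfer_factor t (m2mult g h)
           = m2mult (transfer_factor t g) (transfer_factor (coset_rep (m2mult t g)) h)"
proof -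
  define x where "x = m2mult t g"
  have "x \<in> G" using assms subgroup_m2mult[OF subgroup_G] by (simp add: x_def)
  have "m2mult (transfer_factor t g) (transfer_factor (coset_rep x) h)
          = m2mult (m2mult x h) (minv (coset_rep (m2mult (coset_rep x) h)))"
    using coset_rep_SL2Z[of x] by (simp add: transfer_factor_def x_def m2mult_assoc)
  also have "\<dots> = transfer_factor t (m2mult g h)"
    using coset_rep_m2mult[OF \<open>x \<in> G\<close> assms(3)] by (simp add: transfer_factor_def x_def m2mult_assoc)
  finally show ?thesis by (simp add: x_def)
qed

lemma cls_transfer_rep:
  assumes g: "g \<in> G"
  shows "cls H (transfer_rep g)
           = cls H (transfer_factor m2one g) \<otimes>\<^bsub>ab H\<^esub> cls H (transfer_factor tau g)"
  unfolding transfer_rep_def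
  using transfer_factor_in_H[OF _ g] subgroup_m2one[OF subgroup_G] tau_in_G
  by (simp add: cls_m2mult[OF subgroup_H])

lemma cls_transfer_rep_m2mult:
  assumes g: "g \<in> G" and h: "h \<in> G"
  shows "cls H (transfer_rep (m2mult g h))
           = cls H (transfer_rep g) \<otimes>\<^bsub>ab H\<^esub> cls H (transfer_rep h)"
proof -
  interpret A: comm_group "ab H" by (rule comm_group_ab[OF subgroup_H])
  have one: "m2one \<in> G" by (rule subgroup_m2one[OF subgroup_G])
  define a where "a t = cls H (transfer_factor t g)" for t
  define b where "b t = cls H (transfer_factor t h)" for t
  have ab_carrier: "a t \<in> carrier (ab H)" "b t \<in> carrier (ab H)" if "t \<in> G" for t
    unfolding a_def b_def using transfer_factor_in_H that g h cls_in_carrier[OF subgroup_H] by auto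
  have split: "cls H (transfer_factor t (m2mult g h)) = a t \<otimes>\<^bsub>ab H\<^esub> b (coset_rep (m2mult t g))"
    if "t \<in> G" for t
    unfolding a_def b_def transfer_factor_m2mult[OF that g h]
    using transfer_factor_in_H that g h coset_rep_in_G by (simp add: cls_m2mult[OF subgroup_H])
  have "cls H (transfer_rep (m2mult g h))
          = (a m2one \<otimes>\<^bsub>ab H\<^esub> b (coset_rep g))
              \<otimes>\<^bsub>ab H\<^esub> (a tau \<otimes>\<^bsub>ab H\<^esub> b (coset_rep (m2mult tau g)))"
    using cls_transfer_rep[OF subgroup_m2mult[OF subgroup_G g h]] split[OF one] split[OF tau_in_G]
    by simp
  also have "\<dots> = (a m2one \<otimes>\<^bsub>ab H\<^esub> a tau) \<otimes>\<^bsub>ab H\<^esub> (b m2one \<otimes>\<^bsub>ab H\<^esub> b tau)"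
    \<comment> \<open>right multiplication by g permutes the two cosets of H\<close>
    using coset_rep_tau_m2mult[OF g] ab_carrier[OF one] ab_carrier[OF tau_in_G]
    by (cases "g \<in> Gamma0_upper2") (simp_all add: coset_rep_def A.m_ac)
  also have "\<dots> = cls H (transfer_rep g) \<otimes>\<^bsub>ab H\<^esub> cls H (transfer_rep h)"
    by (simp add: cls_transfer_rep g h a_def b_def)
  finally show ?thesis .
qed

lemma group_hom_cls_transfer_rep: "group_hom (matgrp G) (ab H) (\<lambda>g. cls H (transfer_rep g))"
proof -
  interpret A: comm_group "ab H" by (rule comm_group_ab[OF subgroup_H])
  show ?thesis
    by (intro group_hom.intro group_hom_axioms.intro homI group_matgrp[OF subgroup_G] A.is_group)
       (simp_all add: cls_in_carrier[OF subgroup_H transfer_rep_in_H] cls_transfer_rep_m2mult)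
qed

lemma cls_transfer_rep_cls:
  assumes g: "g \<in> G" and y: "y \<in> cls G g"
  shows "cls H (transfer_rep y) = cls H (transfer_rep g)"
proof -
  interpret A: comm_group "ab H" by (rule comm_group_ab[OF subgroup_H])
  interpret V: group_hom "matgrp G" "ab H" "\<lambda>g. cls H (transfer_rep g)"
    by (rule group_hom_cls_transfer_rep)
  obtain d where d: "d \<in> derived SL2 G" and y_eq: "y = m2mult d g"
    using y unfolding mem_cls_iff[OF subgroup_G] by blast
  have "(\<lambda>g. cls H (transfer_rep g)) ` derived SL2 G
          = derived (ab H) ((\<lambda>g. cls H (transfer_rep g)) ` G)"
    using V.derived_img[of G] by (simp add: derived_matgrp[OF subgroup_G])
  also have "\<dots> = {\<one>\<^bsub>ab H\<^esub>}"
    by (rule A.derived_eq_singleton) (use V.hom_closed in auto)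
  finally have "cls H (transfer_rep d) = \<one>\<^bsub>ab H\<^esub>" using d by blast
  then show ?thesis
    using V.hom_mult[of d g] d derived_subset[OF subgroup_G] g y_eq V.hom_closed[of g] by auto
qed

lemma transfer_rep_eq:
  assumes g: "g \<in> G"
  shows "transfer_rep g = (if g \<in> Gamma0_upper2 then m2mult g (m2mult (m2mult tau g) (minv tau))
                           else m2mult g g)"
  using coset_rep_tau_m2mult[OF g] tau_SL2Z
  by (simp add: transfer_rep_def transfer_factor_def coset_rep_def m2mult_assoc)

lemma subgroup_H_matgrp: "subgroup H (matgrp G)"
  using group.subgroup_incl[OF group_SL2 subgroup_H subgroup_G] by (metis matgrp_eq inf_le1)

lemma rcoset_eq_iff:
  assumes x: "x \<in> G" and y: "y \<in> G"
  shows "H #>\<^bsub>matgrp G\<^esub> x = H #>\<^bsub>matgrp G\<^esub> y \<longleftrightarrow> (x \<in> Gamma0_upper2 \<longleftrightarrow> y \<in> Gamma0_upper2)"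
proof -
  interpret MG: group "matgrp G" by (rule group_matgrp[OF subgroup_G])
  interpret SH: subgroup H "matgrp G" by (rule subgroup_H_matgrp)
  have y': "minv y \<in> G" by (rule subgroup_minv[OF subgroup_G y])
  have "H #>\<^bsub>matgrp G\<^esub> x = H #>\<^bsub>matgrp G\<^esub> y \<longleftrightarrow> x \<in> H #>\<^bsub>matgrp G\<^esub> y"
    using MG.rcos_self[OF _ subgroup_H_matgrp, of x] MG.repr_independence[OF _ _ subgroup_H_matgrp, of x y]
          x y by auto
  also have "\<dots> \<longleftrightarrow> m2mult x (minv y) \<in> H"
    using SH.rcos_module[OF MG.is_group, of y x] x y inv_matgrp[OF subgroup_G y] by simp
  also have "\<dots> \<longleftrightarrow> (x \<in> Gamma0_upper2 \<longleftrightarrow> y \<in> Gamma0_upper2)"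
    using m2mult_in_Gamma0_upper2_iff[OF x y'] subgroup_minv_iff[OF subgroup_Gamma0_upper2]
          subgroup_m2mult[OF subgroup_G x y'] by simp
  finally show ?thesis .
qed

lemma right_transversal_iff:
  "right_transversal G H T \<longleftrightarrow>
     T \<subseteq> G \<and> (\<forall>x \<in> G. \<exists>!t. t \<in> T \<and> (x \<in> Gamma0_upper2 \<longleftrightarrow> t \<in> Gamma0_upper2))"
proof (cases "T \<subseteq> G")
  case True
  have "(t \<in> T \<and> H #>\<^bsub>matgrp G\<^esub> x = H #>\<^bsub>matgrp G\<^esub> t)
          \<longleftrightarrow> (t \<in> T \<and> (x \<in> Gamma0_upper2 \<longleftrightarrow> t \<in> Gamma0_upper2))" if "x \<in> G" for x t
    using rcoset_eq_iff[OF that, of t] True by blast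
  then show ?thesis using True by (simp add: right_transversal_def)
qed (simp add: right_transversal_def)

lemma right_transversal_tau: "right_transversal G H {m2one, tau}"
proof -
  have "m2one \<in> Gamma0_upper2" by (rule subgroup_m2one[OF subgroup_Gamma0_upper2])
  then have "\<exists>!t. t \<in> {m2one, tau} \<and> (x \<in> Gamma0_upper2 \<longleftrightarrow> t \<in> Gamma0_upper2)" for x
    using tau_notin_Gamma0_upper2 by (cases "x \<in> Gamma0_upper2") blast+
  then show ?thesis
    using subgroup_m2one[OF subgroup_G] tau_in_G by (simp add: right_transversal_iff)
qed

lemma right_transversal_obtain:
  assumes "right_transversal G H T"
  obtains t1 t2 where "T = {t1, t2}" "t1 \<in> H" "t2 \<in> G" "t2 \<notin> Gamma0_upper2"
proof -
  have TG: "T \<subseteq> G"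
    and uniq: "\<And>x. x \<in> G \<Longrightarrow> \<exists>!t. t \<in> T \<and> (x \<in> Gamma0_upper2 \<longleftrightarrow> t \<in> Gamma0_upper2)"
    using assms unfolding right_transversal_iff by blast+
  have one: "m2one \<in> G" "m2one \<in> Gamma0_upper2"
    by (rule subgroup_m2one[OF subgroup_G], rule subgroup_m2one[OF subgroup_Gamma0_upper2])
  obtain t1 where t1: "t1 \<in> T" "t1 \<in> Gamma0_upper2" using uniq[OF one(1)] one(2) by blast
  obtain t2 where t2: "t2 \<in> T" "t2 \<notin> Gamma0_upper2"
    using uniq[OF tau_in_G] tau_notin_Gamma0_upper2 by blast
  have "t = t1 \<or> t = t2" if "t \<in> T" for t
  proof (cases "t \<in> Gamma0_upper2")
    case True
    then show ?thesis using uniq[OF one(1)] one(2) t1 that by blast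
  next
    case False
    then show ?thesis using uniq[OF tau_in_G] tau_notin_Gamma0_upper2 t2 that by blast
  qed
  then have "T = {t1, t2}" using t1 t2 by blast
  then show ?thesis using that t1 t2 TG by blast
qed

lemma tv_rep_eq:
  assumes T: "right_transversal G H T" and x: "x \<in> G"
    and t: "t \<in> T" "x \<in> Gamma0_upper2 \<longleftrightarrow> t \<in> Gamma0_upper2"
  shows "tv_rep G H T x = t"
proof -
  have "t \<in> G" using T t(1) by (auto simp: right_transversal_def)
  then have "t \<in> T \<and> H #>\<^bsub>matgrp G\<^esub> x = H #>\<^bsub>matgrp G\<^esub> t"
    using t rcoset_eq_iff[OF x] by blast
  moreover have "\<exists>!t. t \<in> T \<and> H #>\<^bsub>matgrp G\<^esub> x = H #>\<^bsub>matgrp G\<^esub> t"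
    using T x by (simp add: right_transversal_def)
  ultimately show ?thesis unfolding tv_rep_def by (rule the1_equality[rotated])
qed

lemma transfer_elt_eq:
  assumes g: "g \<in> G" shows "transfer_elt G H g = cls H (transfer_rep g)"
proof -
  interpret A: comm_group "ab H" by (rule comm_group_ab[OF subgroup_H])
  note mult = subgroup_m2mult[OF subgroup_G] and inv = subgroup_minv[OF subgroup_G]
  define T where "T = (SOME T. right_transversal G H T)"
  have T: "right_transversal G H T" unfolding T_def using right_transversal_tau by (rule someI)
  obtain t1 t2 where T_eq: "T = {t1, t2}" and t1: "t1 \<in> H"
    and t2: "t2 \<in> G" "t2 \<notin> Gamma0_upper2"
    by (rule right_transversal_obtain[OF T])
  have t2_SL2Z: "t2 \<in> SL2Z" using t2 subgroup_SL2Z[OF subgroup_G] by blast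
  define rep where "rep x = (if x \<in> Gamma0_upper2 then t1 else t2)" for x
  have rep_G: "rep x \<in> G" for x using t1 t2 by (simp add: rep_def)
  have rep_H: "m2mult x (minv (rep x)) \<in> H" if x: "x \<in> G" for x
  proof -
    have "rep x \<in> Gamma0_upper2 \<longleftrightarrow> x \<in> Gamma0_upper2" using t1 t2 by (simp add: rep_def)
    then show ?thesis
      using m2mult_in_Gamma0_upper2_iff[OF x inv[OF rep_G]] mult[OF x inv[OF rep_G]]
            subgroup_minv_iff[OF subgroup_Gamma0_upper2] by simp
  qed
  define f where
    "f t = cls H (m2mult (m2mult t g) (m_inv (matgrp G) (tv_rep G H T (m2mult t g))))" for t
  have f_eq: "f t = cls H (m2mult (m2mult t g) (minv (rep (m2mult t g))))" if "t \<in> G" for t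
  proof -
    have "tv_rep G H T (m2mult t g) = rep (m2mult t g)"
      using tv_rep_eq[OF T mult[OF that g]] T_eq t1 t2 by (simp add: rep_def)
    then show ?thesis using inv_matgrp[OF subgroup_G rep_G] by (simp add: f_def)
  qed
  have "transfer_elt G H g = finprod (ab H) f T"
    unfolding transfer_elt_def T_def[symmetric] f_def Let_def ..
  also have "\<dots> = f t1 \<otimes>\<^bsub>ab H\<^esub> f t2"
  proof -
    have "f t \<in> carrier (ab H)" if "t \<in> G" for t
      using f_eq[OF that] rep_H[OF mult[OF that g]] cls_in_carrier[OF subgroup_H] by simp
    moreover have "t1 \<noteq> t2" using t1 t2 by blast
    ultimately show ?thesis using T_eq t1 t2 by simp
  qed
  also have "\<dots> = cls H (transfer_rep g)"
  proof (cases "g \<in> Gamma0_upper2")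
    case True
    then have "m2mult t1 g \<in> Gamma0_upper2" "m2mult t2 g \<notin> Gamma0_upper2"
      using m2mult_in_Gamma0_upper2_iff g t1 t2 by auto
    then have f: "f t1 = cls H (m2mult (m2mult t1 g) (minv t1))"
      "f t2 = cls H (m2mult (m2mult t2 g) (minv t2))"
      using f_eq t1 t2 by (simp_all add: rep_def)
    define u where "u = m2mult t2 (minv tau)"
    have u: "u \<in> H" using m2mult_minv_tau[OF t2] t2 inv[OF tau_in_G] mult by (simp add: u_def)
    have conj: "m2mult (m2mult tau g) (minv tau) \<in> H"
      using transfer_factor_in_H[OF tau_in_G g] coset_rep_tau_m2mult[OF g] True
      by (simp add: transfer_factor_def)
    have "m2mult (m2mult t2 g) (minv t2)
            = m2mult (m2mult u (m2mult (m2mult tau g) (minv tau))) (minv u)"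
      using tau_SL2Z by (simp add: u_def minv_m2mult m2mult_assoc)
    then have "f t2 = cls H (m2mult (m2mult tau g) (minv tau))"
      using f(2) cls_conj[OF subgroup_H u conj] by simp
    moreover have "f t1 = cls H g" using f(1) cls_conj[OF subgroup_H t1] g True by simp
    ultimately show ?thesis
      using transfer_rep_eq[OF g] True conj g cls_m2mult[OF subgroup_H] by simp
  next
    case False
    then have t1g: "m2mult t1 g \<notin> Gamma0_upper2" and t2g: "m2mult t2 g \<in> Gamma0_upper2"
      using m2mult_in_Gamma0_upper2_iff g t1 t2 by auto
    have "m2mult (m2mult t1 g) (minv t2) \<in> H" "m2mult (m2mult t2 g) (minv t1) \<in> H"
      using rep_H[OF mult[OF _ g], of t1] rep_H[OF mult[OF _ g], of t2] t1 t2 t1g t2g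
      by (simp_all add: rep_def)
    then have "f t1 \<otimes>\<^bsub>ab H\<^esub> f t2
        = cls H (m2mult (m2mult (m2mult t1 g) (minv t2)) (m2mult (m2mult t2 g) (minv t1)))"
      using f_eq t1 t2 t1g t2g by (simp add: rep_def cls_m2mult[OF subgroup_H])
    also have "\<dots> = cls H (m2mult (m2mult t1 (m2mult g g)) (minv t1))"
      using t2_SL2Z by (simp add: m2mult_assoc)
    also have "\<dots> = cls H (transfer_rep g)"
      using cls_conj[OF subgroup_H t1] transfer_rep_in_H[OF g] transfer_rep_eq[OF g] False by simp
    finally show ?thesis .
  qed
  finally show ?thesis .
qed

lemma transfer_ab_cls: "g \<in> G \<Longrightarrow> transfer_ab G H (cls G g) = cls H (transfer_rep g)"
  unfolding transfer_ab_def
  using transfer_elt_eq cls_transfer_rep_cls some_in_cls[OF subgroup_G] cls_subset[OF subgroup_G]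
  by (metis subsetD)

end

section \<open>The operator U'\<close>

lemma tau_transversal_Phi:
  assumes "s \<ge> 1" shows "tau_transversal (Phi N r s)"
proof (rule tau_transversal.intro)
  show "subgroup (Phi N r s) SL2" by (rule subgroup_Phi)
  show "tau \<in> Phi N r s" by (simp add: tau_def Phi_mem)
  fix x assume x: "x \<in> Phi N r s" "x \<notin> Gamma0_upper2"
  obtain a b c d where x_eq: "x = (a,b,c,d)" by (cases x)
  have "(2::int) dvd N * 2^s" using assms by (cases s) auto
  moreover have "N * 2^s dvd a - 1" "\<not> 2 dvd b"
    using x by (simp_all add: x_eq Phi_mem Gamma0_upper2_mem)
  ultimately have "2 dvd a - 1" "\<not> 2 dvd b" using dvd_trans by blast+
  then have "2 dvd b - a" by presburger
  moreover have "m2mult x (minv tau) \<in> SL2Z"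
    using SL2Z_m2mult[OF subgroup_SL2Z[OF subgroup_Phi x(1)] minv_SL2Z[OF tau_SL2Z]] .
  ultimately show "m2mult x (minv tau) \<in> Gamma0_upper2"
    by (simp add: x_eq tau_def minv.simps Gamma0_upper2_def)
qed

lemma tconj_m2mult:
  assumes "x \<in> Gamma0_upper2" "y \<in> Gamma0_upper2"
  shows "tconj (m2mult x y) = m2mult (tconj x) (tconj y)"
proof -
  obtain a b c d e f g h where xy: "x = (a,b,c,d)" "y = (e,f,g,h)" by (cases x; cases y)
  obtain b' f' where "b = 2 * b'" "f = 2 * f'"
    using assms unfolding xy Gamma0_upper2_mem by (meson dvdE)
  then show ?thesis by (simp add: xy algebra_simps)
qed

lemma tconj_Phi: "x \<in> Phi N r s \<inter> Gamma0_upper2 \<Longrightarrow> tconj x \<in> Phi N (Suc r) s"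
proof -
  assume x: "x \<in> Phi N r s \<inter> Gamma0_upper2"
  obtain a b c d where x_eq: "x = (a,b,c,d)" by (cases x)
  obtain b' where "b = 2 * b'" using x by (auto simp: x_eq Gamma0_upper2_mem)
  with x have "a * d - b' * (2 * c) = 1" "N * 2^s dvd 2 * c" "2^Suc r dvd 2 * c"
    by (auto simp: x_eq Phi_mem algebra_simps)
  then show ?thesis using x \<open>b = 2 * b'\<close> by (simp add: x_eq Phi_mem)
qed

lemma group_hom_tconj:
  "group_hom (matgrp (Phi N r s \<inter> Gamma0_upper2)) (matgrp (Phi N (Suc r) s)) tconj"
  by (intro group_hom.intro group_hom_axioms.intro homI group_matgrp subgroup_Phi
        group.subgroups_Inter_pair[OF group_SL2 subgroup_Phi subgroup_Gamma0_upper2])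
     (simp_all add: tconj_Phi tconj_m2mult)

lemma Uprime_cls:
  assumes "s \<ge> 1" and g: "g \<in> Phi N r s"
  shows "Uprime N r s (cls (Phi N r s) g) = cls (Phi N (Suc r) s) (tconj (transfer_rep g))"
proof -
  interpret tau_transversal "Phi N r s" by (rule tau_transversal_Phi) fact
  have "(SOME y. y \<in> cls H (transfer_rep g)) \<in> cls H (transfer_rep g)"
    by (rule some_in_cls[OF subgroup_H transfer_rep_in_H[OF g]])
  from cls_group_hom[OF subgroup_H subgroup_Phi group_hom_tconj transfer_rep_in_H[OF g] this]
  show ?thesis by (simp add: Uprime_def transfer_ab_cls[OF g])
qed

lemma tconj_transfer_rep_Phi:
  "s \<ge> 1 \<Longrightarrow> g \<in> Phi N r s \<Longrightarrow> tconj (transfer_rep g) \<in> Phi N (Suc r) s"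
  using tau_transversal.transfer_rep_in_H[OF tau_transversal_Phi] tconj_Phi by blast

lemma Atkin_U_cls:
  assumes "s \<ge> 1" and g: "g \<in> Phi N r s"
  shows "Atkin_U N r s (cls (Phi N r s) g) = cls (Phi N r s) (tconj (transfer_rep g))"
  unfolding Atkin_U_def Uprime_cls[OF assms]
  by (rule incl_ab_cls[OF subgroup_Phi subgroup_Phi Phi_mono tconj_transfer_rep_Phi[OF assms]]) simp_all

lemma Uprime_incl_ab_cls:
  assumes "s' \<ge> 1" "r' \<le> r" "s' \<le> s" and g: "g \<in> Phi N r s"
  shows "incl_ab (Phi N (Suc r) s) (Phi N (Suc r') s') (Uprime N r s (cls (Phi N r s) g))
           = Uprime N r' s' (incl_ab (Phi N r s) (Phi N r' s') (cls (Phi N r s) g))"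
proof -
  have "s \<ge> 1" using assms by simp
  have "g \<in> Phi N r' s'" using Phi_mono[OF assms(2,3)] g by blast
  then show ?thesis
    using assms tconj_transfer_rep_Phi[OF \<open>s \<ge> 1\<close> g]
    by (simp add: Uprime_cls \<open>s \<ge> 1\<close> incl_ab_cls[OF subgroup_Phi subgroup_Phi Phi_mono])
qed

lemma Atkin_U_incl_ab_cls:
  assumes "s' \<ge> 1" "r' \<le> r" "s' \<le> s" and g: "g \<in> Phi N r s"
  shows "incl_ab (Phi N r s) (Phi N r' s') (Atkin_U N r s (cls (Phi N r s) g))
           = Atkin_U N r' s' (incl_ab (Phi N r s) (Phi N r' s') (cls (Phi N r s) g))"
proof -
  have "s \<ge> 1" using assms by simp
  have "g \<in> Phi N r' s'" using Phi_mono[OF assms(2,3)] g by blast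
  moreover have "tconj (transfer_rep g) \<in> Phi N r s"
    using tconj_transfer_rep_Phi[OF \<open>s \<ge> 1\<close> g] Phi_mono[of r "Suc r" s s N] by auto
  ultimately show ?thesis
    using assms
    by (simp add: Atkin_U_cls \<open>s \<ge> 1\<close> incl_ab_cls[OF subgroup_Phi subgroup_Phi Phi_mono])
qed

theorem lemma3p2:
  fixes N :: int and r s r' s' :: nat
  assumes "N > 0" and "odd N"
    and "r \<ge> s" and "s \<ge> 2" and "r' \<ge> s'" and "s' \<ge> 2"
    and "r \<ge> r'" and "s \<ge> s'"
  shows "(\<forall>C \<in> carrier (ab (Phi N r s)).
           incl_ab (Phi N (Suc r) s) (Phi N (Suc r') s') (Uprime N r s C)
             = Uprime N r' s' (incl_ab (Phi N r s) (Phi N r' s') C))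
         \<and> (\<forall>C \<in> carrier (ab (Phi N r s)).
           incl_ab (Phi N r s) (Phi N r' s') (Atkin_U N r s C)
             = Atkin_U N r' s' (incl_ab (Phi N r s) (Phi N r' s') C))"
  \<comment> \<open>only s' \<ge> 1 and the inclusion of the groups are used; N may be any integer\<close>
  using assms
  by (simp add: carrier_ab[OF subgroup_Phi] Uprime_incl_ab_cls Atkin_U_incl_ab_cls)

end
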